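(* There is a constant $c>0$ depending only on $\alpha$ such that the following holds. Suppose $0<A<B$ and $\Lambda,\Gamma\ge0$ with $A\pm\Lambda$ and $B\pm\Gamma$ integers, $\Lambda<A$, $B-\Gamma\ge A$, and $\Gamma/B\le\frac18\Lambda/A$. Then \[ \Pr\Bigl[\bigcup_{\ell\le\Gamma}BINGO(A+\Lambda,A-\Lambda;B+\ell,B-\ell)\Bigr]\le e^{-c\Lambda^2/A}, \] where the union is over all $\ell\le\Gamma$ (including negative $\ell$) with $B\pm\ell$ integers.
   Context: Fix $\alpha>1$. Consider the Markov chain on $\mathbb N\times\mathbb N$ which from state $(i,j)$ moves to $(i+1,j)$ with probability $i^\alpha/(i^\alpha+j^\alpha)$ and to $(i,j+1)$ with probability $j^\alpha/(i^\alpha+j^\alpha)$. For states $(a,b)$, $(c,d)$, $BINGO(a,b;c,d)$ denotes the event that this chain, started at state $(a,b)$, visits the state $(c,d)$ (empty if $(c,d)$ is not coordinatewise $\ge(a,b)$). *)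

theory Defs
  imports "HOL-Probability.Probability"
begin

definition step_pmf :: "real \<Rightarrow> nat \<times> nat \<Rightarrow> (nat \<times> nat) pmf" where
  "step_pmf \<alpha> s = (case s of (i, j) \<Rightarrow>
     map_pmf (\<lambda>b. if b then (i + 1, j) else (i, j + 1))
       (bernoulli_pmf (real i powr \<alpha> / (real i powr \<alpha> + real j powr \<alpha>))))"

fun traj :: "real \<Rightarrow> nat \<times> nat \<Rightarrow> nat \<Rightarrow> (nat \<times> nat) list pmf" where
  "traj \<alpha> s 0 = return_pmf [s]"
| "traj \<alpha> s (Suc k) = traj \<alpha> s k \<bind> (\<lambda>p. map_pmf (\<lambda>x. p @ [x]) (step_pmf \<alpha> (last p)))"

definition visit_prob :: "real \<Rightarrow> nat \<times> nat \<Rightarrow> (nat \<times> nat) set \<Rightarrow> real" where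
  "visit_prob \<alpha> s T = (SUP k::nat. measure_pmf.prob (traj \<alpha> s k) {p. set p \<inter> T \<noteq> {}})"

end

theory Submission
  imports Defs
begin

text \<open>The potential \<open>h(i,j) = exp(-\<lambda>(i-j)/(i+j) + 4\<lambda>\<^sup>2/(i+j))\<close> is a supermartingale of the
  chain wherever \<open>i > j\<close>: the reinforcement (\<open>\<alpha> \<ge> 1\<close>) pushes the normalised gap \<open>(i-j)/(i+j)\<close>
  upwards on average, and the term \<open>4\<lambda>\<^sup>2/(i+j)\<close> absorbs the second-order fluctuations.
  Since \<open>h < 1\<close> forces \<open>i > j\<close>, the potential capped at a level \<open>K \<le> 1\<close> is a supermartingale
  everywhere; stopping it when the target set \<open>T\<close> is hit and applying Markov's inequality gives
  \<open>P(hit T) \<le> h(start)/K\<close> whenever \<open>h \<ge> K\<close> on \<open>T\<close>. For the start \<open>(A+\<Lambda>, A-\<Lambda>)\<close>, targets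
  \<open>(B+l, B-l)\<close> with \<open>l \<le> \<Gamma>\<close>, \<open>\<lambda> = \<Lambda>/8\<close> and \<open>K = exp(-\<lambda>\<Gamma>/B)\<close>, this bound is at most
  \<open>exp(-5\<Lambda>\<^sup>2/(64A))\<close>.\<close>

lemma exp_le_quadratic:
  fixes x :: real
  assumes "\<bar>x\<bar> \<le> 1"
  shows "exp x \<le> 1 + x + x\<^sup>2"
proof (cases "x \<ge> 0")
  case True
  then show ?thesis using exp_bound assms by auto
next
  case False
  have lower: "1 - x + x\<^sup>2/2 \<le> exp (-x)"
    using exp_lower_Taylor_quadratic[of "-x"] False by simp
  have pos: "0 < 1 - x + x\<^sup>2/2" using False by (simp add: add_pos_nonneg)
  have "(1 + x + x\<^sup>2) * (1 - x + x\<^sup>2/2) = 1 + x\<^sup>2/2 - x^3/2 + x^4/2"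
    by (simp add: algebra_simps power2_eq_square power3_eq_cube power4_eq_xxxx
        add_divide_distrib diff_divide_distrib)
  also have "\<dots> \<ge> 1"
  proof -
    have "x^3 < 0" using False by (simp add: power3_eq_cube mult_neg_pos mult_pos_neg zero_less_mult_iff)
    moreover have "x^4 \<ge> 0" "x\<^sup>2 \<ge> 0" by auto
    ultimately show ?thesis by linarith
  qed
  finally have "1 / (1 - x + x\<^sup>2/2) \<le> 1 + x + x\<^sup>2" using pos by (simp add: divide_le_eq)
  moreover have "exp x \<le> 1 / (1 - x + x\<^sup>2/2)"
    using lower pos by (simp add: exp_minus divide_simps mult.commute)
  ultimately show ?thesis by linarith
qed

lemma two_point_exp_moment_le:
  fixes P t1 t2 d :: real
  assumes "0 \<le> P" "P \<le> 1" "\<bar>t1\<bar> \<le> 1" "\<bar>t2\<bar> \<le> 1"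
    and mean: "P * t1 + (1 - P) * t2 \<le> 0" and "t1\<^sup>2 \<le> d" "t2\<^sup>2 \<le> d"
  shows "P * exp t1 + (1 - P) * exp t2 \<le> exp d"
proof -
  have "P * exp t1 + (1 - P) * exp t2 \<le> P * (1 + t1 + t1\<^sup>2) + (1 - P) * (1 + t2 + t2\<^sup>2)"
    using assms exp_le_quadratic by (intro add_mono mult_left_mono) auto
  also have "\<dots> = 1 + (P * t1 + (1 - P) * t2) + (P * t1\<^sup>2 + (1 - P) * t2\<^sup>2)"
    by (simp add: algebra_simps)
  also have "\<dots> \<le> 1 + 0 + (P * d + (1 - P) * d)"
    using assms by (intro add_mono mult_left_mono) auto
  also have "\<dots> \<le> exp d" by (simp add: algebra_simps)
  finally show ?thesis .
qed

lemma powr_mult_le_mult_powr: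
  fixes X Y \<alpha> :: real
  assumes "0 \<le> Y" "Y \<le> X" "1 \<le> \<alpha>"
  shows "Y powr \<alpha> * X \<le> X powr \<alpha> * Y"
proof (cases "Y = 0")
  case True
  then show ?thesis using assms by simp
next
  case False
  then have Y: "Y > 0" using assms by simp
  have "Y powr (\<alpha> - 1) \<le> X powr (\<alpha> - 1)" using assms Y by (intro powr_mono2) auto
  then have "X * Y * Y powr (\<alpha> - 1) \<le> X * Y * X powr (\<alpha> - 1)"
    using assms Y by (intro mult_left_mono) auto
  moreover have "Y powr \<alpha> = Y * Y powr (\<alpha> - 1)" "X powr \<alpha> = X * X powr (\<alpha> - 1)"
    using Y assms by (simp_all add: powr_diff)
  ultimately show ?thesis by (simp add: algebra_simps)
qed

lemma divide_add_le_1: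
  fixes a b :: real
  assumes "0 \<le> a" "0 \<le> b"
  shows "a / (a + b) \<le> 1"
  using assms by (simp add: divide_le_eq)

definition potential :: "real \<Rightarrow> real \<Rightarrow> real \<Rightarrow> real" where
  "potential lam X Y = exp (- lam * ((X - Y) / (X + Y)) + 4 * lam\<^sup>2 / (X + Y))"

lemma reinforcement_drift:
  fixes X Y \<alpha> :: real
  assumes "0 \<le> Y" "Y < X" "1 \<le> \<alpha>"
  defines "P \<equiv> X powr \<alpha> / (X powr \<alpha> + Y powr \<alpha>)"
  shows "(1 - P) * X \<le> P * Y"
proof -
  have sum_pos: "0 < X powr \<alpha> + Y powr \<alpha>" using assms by (simp add: add_pos_nonneg)
  then have "1 - P = Y powr \<alpha> / (X powr \<alpha> + Y powr \<alpha>)"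
    unfolding P_def by (simp add: field_simps)
  then show ?thesis
    unfolding P_def using powr_mult_le_mult_powr[of Y X \<alpha>] assms sum_pos
    by (simp add: divide_simps)
qed

lemma potential_shift:
  fixes lam X Y :: real
  assumes "0 < X + Y"
  defines "c \<equiv> 2 * lam / ((X + Y) * (X + Y + 1))" and "d \<equiv> 4 * lam\<^sup>2 / ((X + Y) * (X + Y + 1))"
  shows "potential lam (X + 1) Y = potential lam X Y * exp (- c * Y - d)"
    and "potential lam X (Y + 1) = potential lam X Y * exp (c * X - d)"
proof -
  define n where "n = X + Y"
  have n: "0 < n" "X = n - Y" using assms by (simp_all add: n_def)
  show "potential lam (X + 1) Y = potential lam X Y * exp (- c * Y - d)"
    unfolding potential_def c_def d_def mult_exp_exp n(2) using n(1)
    by (simp add: divide_simps add_pos_pos) (simp add: algebra_simps power2_eq_square)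
  show "potential lam X (Y + 1) = potential lam X Y * exp (c * X - d)"
    unfolding potential_def c_def d_def mult_exp_exp n(2) using n(1)
    by (simp add: divide_simps add_pos_pos) (simp add: algebra_simps power2_eq_square)
qed

lemma potential_step_le:
  fixes X Y \<alpha> lam :: real
  assumes "0 \<le> Y" "Y < X" "1 \<le> \<alpha>" "0 \<le> lam" "2 * lam \<le> X + Y + 1"
  defines "P \<equiv> X powr \<alpha> / (X powr \<alpha> + Y powr \<alpha>)"
  shows "P * potential lam (X + 1) Y + (1 - P) * potential lam X (Y + 1) \<le> potential lam X Y"
proof -
  define n where "n = X + Y"
  define c where "c = 2 * lam / (n * (n + 1))"
  define d where "d = 4 * lam\<^sup>2 / (n * (n + 1))"
  have n: "0 < n" using assms by (simp add: n_def)
  have P01: "0 \<le> P" "P \<le> 1" unfolding P_def using assms by (simp_all add: divide_add_le_1)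
  have "\<bar>- c * Y\<bar> = (2 * lam / (n + 1)) * (Y / n)" "\<bar>c * X\<bar> = (2 * lam / (n + 1)) * (X / n)"
    unfolding c_def using assms n by (simp_all add: abs_mult)
  moreover have "2 * lam / (n + 1) \<le> 1" "Y / n \<le> 1" "X / n \<le> 1"
    using assms n by (auto simp: n_def)
  ultimately have small: "\<bar>- c * Y\<bar> \<le> 1" "\<bar>c * X\<bar> \<le> 1"
    using assms n by (metis divide_nonneg_pos mult_le_one less_le_trans zero_le_mult_iff
        zero_le_numeral add_pos_nonneg zero_less_one le_less)+
  have "Y\<^sup>2 \<le> n * (n + 1)" "X\<^sup>2 \<le> n * (n + 1)"
    using assms by (simp_all add: n_def power2_eq_square mult_mono)
  moreover have "(- c * Y)\<^sup>2 = d * (Y\<^sup>2 / (n * (n + 1)))" "(c * X)\<^sup>2 = d * (X\<^sup>2 / (n * (n + 1)))"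
    unfolding c_def d_def using n by (simp_all add: field_simps power2_eq_square)
  moreover have "0 \<le> d" unfolding d_def using n by simp
  ultimately have second_moment: "(- c * Y)\<^sup>2 \<le> d" "(c * X)\<^sup>2 \<le> d"
    using n by (auto intro!: mult_left_mono simp: divide_le_eq)
  have "P * (- c * Y) + (1 - P) * (c * X) = c * ((1 - P) * X - P * Y)"
    by (simp add: algebra_simps)
  also have "\<dots> \<le> 0"
    using reinforcement_drift[OF assms(1-3)] assms n unfolding c_def P_def
    by (intro mult_nonneg_nonpos) auto
  finally have mean: "P * (- c * Y) + (1 - P) * (c * X) \<le> 0" .
  have shift: "potential lam (X + 1) Y = potential lam X Y * exp (- c * Y - d)"
    "potential lam X (Y + 1) = potential lam X Y * exp (c * X - d)"
    using potential_shift[of X Y lam] n unfolding c_def d_def n_def by simp_all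
  have "P * potential lam (X + 1) Y + (1 - P) * potential lam X (Y + 1)
      = potential lam X Y * exp (- d) * (P * exp (- c * Y) + (1 - P) * exp (c * X))"
    unfolding shift exp_diff exp_minus[of d] by (simp add: algebra_simps divide_inverse)
  also have "\<dots> \<le> potential lam X Y * exp (- d) * exp d"
    using two_point_exp_moment_le[OF P01 small mean second_moment]
    by (intro mult_left_mono) (simp_all add: potential_def)
  also have "\<dots> = potential lam X Y" by (simp add: exp_minus)
  finally show ?thesis .
qed

lemma potential_lt_1_imp_gt:
  assumes "potential lam X Y < 1" "0 \<le> lam" "0 < X + Y"
  shows "Y < X"
proof -
  have "4 * lam\<^sup>2 / (X + Y) < lam * ((X - Y) / (X + Y))"
    using assms(1) by (simp add: potential_def)
  then have "4 * lam\<^sup>2 < lam * (X - Y)" using assms(3) by (simp add: divide_simps)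
  moreover have "0 \<le> 4 * lam\<^sup>2" by simp
  ultimately have "0 < lam * (X - Y)" by linarith
  then show ?thesis using assms(2) by (simp add: zero_less_mult_iff)
qed

lemma expectation_step_pmf:
  "measure_pmf.expectation (step_pmf \<alpha> (i, j)) f =
     (real i powr \<alpha> / (real i powr \<alpha> + real j powr \<alpha>)) * f (i + 1, j)
   + (1 - real i powr \<alpha> / (real i powr \<alpha> + real j powr \<alpha>)) * f (i, j + 1)"
proof -
  have "real i powr \<alpha> / (real i powr \<alpha> + real j powr \<alpha>) \<le> 1"
    by (simp add: divide_add_le_1)
  then show ?thesis by (simp add: step_pmf_def mult.commute)
qed

lemma capped_potential_step_le:
  assumes "1 \<le> \<alpha>" "0 \<le> lam" "1 \<le> i + j" "2 * lam \<le> real (i + j) + 1" "K \<le> 1"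
  shows "measure_pmf.expectation (step_pmf \<alpha> (i, j)) (\<lambda>(x, y). min (potential lam (real x) (real y)) K)
    \<le> min (potential lam i j) K"
proof -
  define P where "P = real i powr \<alpha> / (real i powr \<alpha> + real j powr \<alpha>)"
  have P01: "0 \<le> P" "P \<le> 1" unfolding P_def by (simp_all add: divide_add_le_1)
  have E: "measure_pmf.expectation (step_pmf \<alpha> (i, j)) (\<lambda>(x, y). min (potential lam (real x) (real y)) K)
      = P * min (potential lam (i + 1) j) K + (1 - P) * min (potential lam i (j + 1)) K"
    unfolding expectation_step_pmf P_def by (simp add: add_ac)
  show ?thesis
  proof (cases "K \<le> potential lam i j")
    case True
    have "P * min (potential lam (i + 1) j) K + (1 - P) * min (potential lam i (j + 1)) K
        \<le> P * K + (1 - P) * K"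
      using P01 by (intro add_mono mult_left_mono) auto
    also have "\<dots> = min (potential lam i j) K" using True by (simp add: left_diff_distrib)
    finally show ?thesis unfolding E .
  next
    case False
    then have "potential lam i j < 1" using assms(5) by linarith
    then have "real j < real i"
      by (rule potential_lt_1_imp_gt[OF _ assms(2)]) (use assms(3) in simp)
    then have "P * potential lam (real i + 1) j + (1 - P) * potential lam i (real j + 1)
        \<le> potential lam i j"
      unfolding P_def using assms by (intro potential_step_le) auto
    moreover have "P * min (potential lam (i + 1) j) K + (1 - P) * min (potential lam i (j + 1)) K
        \<le> P * potential lam (real i + 1) j + (1 - P) * potential lam i (real j + 1)"
      using P01 by (intro add_mono mult_left_mono) (auto simp: add.commute)
    ultimately show ?thesis using False unfolding E by simp
  qed
qed

lemma finite_set_pmf_traj: "finite (set_pmf (traj \<alpha> s k))"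
  by (induction k) (auto simp: step_pmf_def split: prod.splits)

lemma sum_last_traj:
  assumes "p \<in> set_pmf (traj \<alpha> s k)"
  shows "fst (last p) + snd (last p) = fst s + snd s + k"
  using assms
proof (induction k arbitrary: p)
  case 0
  then show ?case by simp
next
  case (Suc k)
  then obtain q x where q: "q \<in> set_pmf (traj \<alpha> s k)" "x \<in> set_pmf (step_pmf \<alpha> (last q))"
    and p: "p = q @ [x]"
    by auto
  obtain i j where ij: "last q = (i, j)" by force
  have "x = (i + 1, j) \<or> x = (i, j + 1)" using q(2) ij by (auto simp: step_pmf_def)
  then show ?case using Suc.IH[OF q(1)] p ij by auto
qed

lemma traj_expectation_le:
  fixes F :: "(nat \<times> nat) list \<Rightarrow> real"
  assumes step: "\<And>k p. p \<in> set_pmf (traj \<alpha> s k) \<Longrightarrow>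
    measure_pmf.expectation (map_pmf (\<lambda>x. p @ [x]) (step_pmf \<alpha> (last p))) F \<le> F p"
  shows "measure_pmf.expectation (traj \<alpha> s k) F \<le> F [s]"
proof (induction k)
  case 0
  then show ?case by simp
next
  case (Suc k)
  let ?A = "set_pmf (traj \<alpha> s k)"
  let ?next = "\<lambda>p. map_pmf (\<lambda>x. p @ [x]) (step_pmf \<alpha> (last p))"
  have "finite (set_pmf (?next p))" for p by (simp add: step_pmf_def split: prod.splits)
  then have "measure_pmf.expectation (traj \<alpha> s (Suc k)) F
      = (\<Sum>p\<in>?A. pmf (traj \<alpha> s k) p * measure_pmf.expectation (?next p) F)"
    using pmf_expectation_bind[of ?A ?next "traj \<alpha> s k" F] finite_set_pmf_traj by simp
  also have "\<dots> \<le> (\<Sum>p\<in>?A. pmf (traj \<alpha> s k) p * F p)"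
    using step by (intro sum_mono mult_left_mono) auto
  also have "\<dots> = measure_pmf.expectation (traj \<alpha> s k) F"
    by (simp add: integral_measure_pmf[of ?A] finite_set_pmf_traj mult.commute)
  finally show ?case using Suc by simp
qed

lemma visit_prob_le:
  fixes F :: "(nat \<times> nat) list \<Rightarrow> real"
  assumes "0 < K" "\<And>p. 0 \<le> F p" "\<And>p. set p \<inter> T \<noteq> {} \<Longrightarrow> K \<le> F p"
    and step: "\<And>k p. p \<in> set_pmf (traj \<alpha> s k) \<Longrightarrow>
      measure_pmf.expectation (map_pmf (\<lambda>x. p @ [x]) (step_pmf \<alpha> (last p))) F \<le> F p"
  shows "visit_prob \<alpha> s T \<le> F [s] / K"
  unfolding visit_prob_def
proof (rule cSUP_least)
  fix k
  let ?M = "traj \<alpha> s k" and ?E = "{p. set p \<inter> T \<noteq> {}}"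
  have "K * measure_pmf.prob ?M ?E = measure_pmf.expectation ?M (\<lambda>p. K * indicator ?E p)"
    by simp
  also have "\<dots> \<le> measure_pmf.expectation ?M F"
    using assms(2,3) by (intro integral_mono integrable_measure_pmf_finite finite_set_pmf_traj)
      (auto simp: indicator_def)
  also have "\<dots> \<le> F [s]" using step by (rule traj_expectation_le)
  finally show "measure_pmf.prob ?M ?E \<le> F [s] / K"
    using assms(1) by (simp add: field_simps)
qed simp

lemma visit_prob_le_potential:
  assumes "1 \<le> \<alpha>" "0 \<le> lam" "1 \<le> i + j" "2 * lam \<le> real (i + j) + 1" "0 < K" "K \<le> 1"
    and target: "\<And>x y. (x, y) \<in> T \<Longrightarrow> K \<le> potential lam x y"
  shows "visit_prob \<alpha> (i, j) T \<le> potential lam i j / K"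
proof -
  define capped where "capped = (\<lambda>(x, y). min (potential lam (real x) (real y)) K)"
  define F where "F p = (if set p \<inter> T \<noteq> {} then K else capped (last p))" for p
  have capped_target: "capped x = K" if "x \<in> T" for x
    using target that by (cases x) (simp add: capped_def)
  have "visit_prob \<alpha> (i, j) T \<le> F [(i, j)] / K"
  proof (rule visit_prob_le)
    show "0 \<le> F p" for p
      using assms(5) by (auto simp: F_def capped_def potential_def split: prod.split)
    show "K \<le> F p" if "set p \<inter> T \<noteq> {}" for p using that by (simp add: F_def)
    fix k p
    assume p: "p \<in> set_pmf (traj \<alpha> (i, j) k)"
    obtain i' j' where last: "last p = (i', j')" by force
    have sum: "i' + j' = i + j + k" using sum_last_traj[OF p] last by simp
    show "measure_pmf.expectation (map_pmf (\<lambda>x. p @ [x]) (step_pmf \<alpha> (last p))) F \<le> F p"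
    proof (cases "set p \<inter> T \<noteq> {}")
      case True
      then show ?thesis by (simp add: F_def)
    next
      case False
      then have "F (p @ [x]) = capped x" for x
        using capped_target by (auto simp: F_def)
      then have "measure_pmf.expectation (map_pmf (\<lambda>x. p @ [x]) (step_pmf \<alpha> (last p))) F
          = measure_pmf.expectation (step_pmf \<alpha> (i', j')) capped"
        by (simp add: last)
      also have "\<dots> \<le> capped (i', j')"
        unfolding capped_def case_prod_conv using assms sum by (intro capped_potential_step_le) auto
      finally show ?thesis using False last by (simp add: F_def)
    qed
  qed fact
  also have "F [(i, j)] \<le> potential lam i j"
    using target[of i j] by (auto simp: F_def capped_def)
  then have "F [(i, j)] / K \<le> potential lam i j / K"
    using assms(5) by (simp add: divide_right_mono)
  finally show ?thesis .
qed

lemma potential_antidiagonal: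
  assumes "0 < B"
  shows "potential lam (B + l) (B - l) = exp (- lam * (l / B) + 2 * lam\<^sup>2 / B)"
  using assms by (simp add: potential_def)

lemma potential_antidiagonal_ge:
  assumes "0 < B" "0 \<le> lam" "l \<le> \<Gamma>"
  shows "exp (- lam * (\<Gamma> / B)) \<le> potential lam (B + l) (B - l)"
proof -
  have "lam * (l / B) \<le> lam * (\<Gamma> / B)"
    using assms by (intro mult_left_mono divide_right_mono) auto
  moreover have "0 \<le> 2 * lam\<^sup>2 / B" using assms by simp
  ultimately have "- lam * (\<Gamma> / B) \<le> - lam * (l / B) + 2 * lam\<^sup>2 / B" by linarith
  then show ?thesis using assms(1) by (simp add: potential_antidiagonal)
qed

lemma real_nat_floor_Ints:
  fixes x :: real
  assumes "x \<in> \<int>" "0 \<le> x"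
  shows "real (nat \<lfloor>x\<rfloor>) = x"
  using assms by (auto elim!: Ints_cases)

lemma hitting_exponent_le:
  fixes A B \<Lambda> \<Gamma> :: real
  assumes "0 < A" "0 \<le> \<Lambda>" "\<Gamma> / B \<le> (1/8) * (\<Lambda> / A)"
  shows "- (\<Lambda>/8) * (\<Lambda> / A) + 2 * (\<Lambda>/8)\<^sup>2 / A + (\<Lambda>/8) * (\<Gamma> / B) \<le> - (1/16) * \<Lambda>\<^sup>2 / A"
proof -
  have "(\<Lambda>/8) * (\<Gamma> / B) \<le> (\<Lambda>/8) * ((1/8) * (\<Lambda> / A))"
    using assms by (intro mult_left_mono) auto
  moreover have "- (\<Lambda>/8) * (\<Lambda> / A) + 2 * (\<Lambda>/8)\<^sup>2 / A + (\<Lambda>/8) * ((1/8) * (\<Lambda> / A))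
      = - (5/64) * (\<Lambda>\<^sup>2 / A)"
    by (simp add: power2_eq_square add_divide_distrib diff_divide_distrib)
  moreover have "0 \<le> \<Lambda>\<^sup>2 / A" using assms by simp
  ultimately show ?thesis by simp
qed

theorem mainTheorem10:
  fixes \<alpha> :: real
  assumes "\<alpha> > 1"
  shows "\<exists>c>0. \<forall>A B \<Lambda> \<Gamma> :: real.
    0 < A \<longrightarrow> A < B \<longrightarrow> 0 \<le> \<Lambda> \<longrightarrow> 0 \<le> \<Gamma> \<longrightarrow>
    A + \<Lambda> \<in> \<int> \<longrightarrow> A - \<Lambda> \<in> \<int> \<longrightarrow> B + \<Gamma> \<in> \<int> \<longrightarrow> B - \<Gamma> \<in> \<int> \<longrightarrow>
    \<Lambda> < A \<longrightarrow> B - \<Gamma> \<ge> A \<longrightarrow> \<Gamma> / B \<le> (1/8) * (\<Lambda> / A) \<longrightarrow>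
    visit_prob \<alpha> (nat \<lfloor>A + \<Lambda>\<rfloor>, nat \<lfloor>A - \<Lambda>\<rfloor>)
      {(x, y). \<exists>l::real. l \<le> \<Gamma> \<and> real x = B + l \<and> real y = B - l}
    \<le> exp (- c * \<Lambda>\<^sup>2 / A)"
proof (intro exI[of _ "1/16"] conjI allI impI)
  fix A B \<Lambda> \<Gamma> :: real
  assume A: "0 < A" "A < B" and \<Lambda>: "0 \<le> \<Lambda>" "\<Lambda> < A" and \<Gamma>: "0 \<le> \<Gamma>"
    and ints: "A + \<Lambda> \<in> \<int>" "A - \<Lambda> \<in> \<int>" and ratio: "\<Gamma> / B \<le> (1/8) * (\<Lambda> / A)"
  define a where "a = nat \<lfloor>A + \<Lambda>\<rfloor>"
  define b where "b = nat \<lfloor>A - \<Lambda>\<rfloor>"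
  define K where "K = exp (- (\<Lambda>/8) * (\<Gamma> / B))"
  have ab: "real a = A + \<Lambda>" "real b = A - \<Lambda>"
    using ints A \<Lambda> by (simp_all add: a_def b_def real_nat_floor_Ints)
  have target: "K \<le> potential (\<Lambda>/8) (real x) (real y)"
    if "(x, y) \<in> {(x, y). \<exists>l. l \<le> \<Gamma> \<and> real x = B + l \<and> real y = B - l}" for x y
    using that potential_antidiagonal_ge[of B "\<Lambda>/8" _ \<Gamma>] A \<Lambda> unfolding K_def by auto
  have "0 \<le> (\<Lambda>/8) * (\<Gamma> / B)" using A \<Lambda> \<Gamma> by simp
  then have K: "0 < K" "K \<le> 1" unfolding K_def by simp_all
  have "visit_prob \<alpha> (a, b) {(x, y). \<exists>l. l \<le> \<Gamma> \<and> real x = B + l \<and> real y = B - l}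
      \<le> potential (\<Lambda>/8) (real a) (real b) / K"
    using assms A \<Lambda> ab K by (intro visit_prob_le_potential target) auto
  also have "\<dots> = exp (- (\<Lambda>/8) * (\<Lambda> / A) + 2 * (\<Lambda>/8)\<^sup>2 / A + (\<Lambda>/8) * (\<Gamma> / B))"
    unfolding ab K_def potential_antidiagonal[OF A(1)] exp_diff[symmetric] by (simp add: algebra_simps)
  also have "\<dots> \<le> exp (- (1/16) * \<Lambda>\<^sup>2 / A)"
    using hitting_exponent_le[OF A(1) \<Lambda>(1) ratio] by simp
  finally show "visit_prob \<alpha> (nat \<lfloor>A + \<Lambda>\<rfloor>, nat \<lfloor>A - \<Lambda>\<rfloor>)
      {(x, y). \<exists>l. l \<le> \<Gamma> \<and> real x = B + l \<and> real y = B - l} \<le> exp (- (1/16) * \<Lambda>\<^sup>2 / A)"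
    by (simp add: a_def b_def)
qed simp

end
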